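(* For every word $w$ of length $n\ge 2$, $f(w)\ge n+2$.
   Context: A word of length $n$ is a sequence $w=w_1w_2\cdots w_n$ of letters (symbols). Let $[n]=\{1,\dots,n\}$. An $n$-grid is a function $G:[n]^2\to\Sigma$, where $\Sigma$ is an arbitrary set of letters. The $i$th row of $G$ contains $w$ if $G(i,j)=w_j$ for all $1\le j\le n$, or $G(i,j)=w_{n-j+1}$ for all $1\le j\le n$. The $j$th column contains $w$ if $G(i,j)=w_i$ for all $i$, or $G(i,j)=w_{n-i+1}$ for all $i$. The main diagonal contains $w$ if $G(i,i)=w_i$ for all $i$ or $G(i,i)=w_{n-i+1}$ for all $i$; the anti-diagonal contains $w$ if $G(i,n-i+1)=w_i$ for all $i$ or $G(i,n-i+1)=w_{n-i+1}$ for all $i$. Let $f(w,G)$ be the number of the $2n+2$ lines ($n$ rows, $n$ columns, $2$ diagonals) of $G$ that contain $w$, and $f(w)=\max_G f(w,G)$ over all $n$-grids $G$. *)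

theory Defs
  imports Main
begin

(* A word w of length n is a list; letter w_i (1-based) is w ! (i - 1).
   An n-grid is a function G :: nat => nat => 'a, only its values on [n]^2 matter. *)

definition row_contains :: "'a list \<Rightarrow> (nat \<Rightarrow> nat \<Rightarrow> 'a) \<Rightarrow> nat \<Rightarrow> bool" where
  "row_contains w G i \<longleftrightarrow> (let n = length w in
     (\<forall>j\<in>{1..n}. G i j = w ! (j - 1)) \<or> (\<forall>j\<in>{1..n}. G i j = w ! (n - j)))"

definition col_contains :: "'a list \<Rightarrow> (nat \<Rightarrow> nat \<Rightarrow> 'a) \<Rightarrow> nat \<Rightarrow> bool" where
  "col_contains w G j \<longleftrightarrow> (let n = length w in
     (\<forall>i\<in>{1..n}. G i j = w ! (i - 1)) \<or> (\<forall>i\<in>{1..n}. G i j = w ! (n - i)))"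

definition diag_contains :: "'a list \<Rightarrow> (nat \<Rightarrow> nat \<Rightarrow> 'a) \<Rightarrow> bool" where
  "diag_contains w G \<longleftrightarrow> (let n = length w in
     (\<forall>i\<in>{1..n}. G i i = w ! (i - 1)) \<or> (\<forall>i\<in>{1..n}. G i i = w ! (n - i)))"

definition antidiag_contains :: "'a list \<Rightarrow> (nat \<Rightarrow> nat \<Rightarrow> 'a) \<Rightarrow> bool" where
  "antidiag_contains w G \<longleftrightarrow> (let n = length w in
     (\<forall>i\<in>{1..n}. G i (n - i + 1) = w ! (i - 1)) \<or> (\<forall>i\<in>{1..n}. G i (n - i + 1) = w ! (n - i)))"

definition f_grid :: "'a list \<Rightarrow> (nat \<Rightarrow> nat \<Rightarrow> 'a) \<Rightarrow> nat" where
  "f_grid w G = card {i\<in>{1..length w}. row_contains w G i}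
              + card {j\<in>{1..length w}. col_contains w G j}
              + (if diag_contains w G then 1 else 0)
              + (if antidiag_contains w G then 1 else 0)"

(* f(w) = max over all n-grids (the set of values is bounded by 2n+2, so Max exists) *)
definition f_word :: "'a list \<Rightarrow> nat" where
  "f_word w = Max (range (f_grid w))"

end

theory Submission
  imports Defs
begin

(* Fill every row of the grid with w. Then all n rows contain w, the main diagonal reads w
   forwards and the anti-diagonal reads w backwards, so n + 2 lines contain w. The argument
   does not need n >= 2. *)

lemma f_grid_le: "f_grid w G \<le> 2 * length w + 2"
proof -
  have "card {i\<in>{1..length w}. row_contains w G i} \<le> card {1..length w}"
    by (intro card_mono) auto
  moreover have "card {j\<in>{1..length w}. col_contains w G j} \<le> card {1..length w}"
    by (intro card_mono) auto
  ultimately show ?thesis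
    unfolding f_grid_def by simp
qed

lemma finite_range_f_grid: "finite (range (f_grid w))"
  by (rule finite_subset[of _ "{..2 * length w + 2}"]) (use f_grid_le in auto)

lemma f_grid_le_f_word: "f_grid w G \<le> f_word w"
  unfolding f_word_def by (intro Max_ge finite_range_f_grid rangeI)

definition repeated_rows_grid :: "'a list \<Rightarrow> nat \<Rightarrow> nat \<Rightarrow> 'a" where
  "repeated_rows_grid w = (\<lambda>i j. w ! (j - 1))"

lemma row_contains_repeated_rows_grid: "row_contains w (repeated_rows_grid w) i"
  unfolding row_contains_def repeated_rows_grid_def by simp

lemma diag_contains_repeated_rows_grid: "diag_contains w (repeated_rows_grid w)"
  unfolding diag_contains_def repeated_rows_grid_def by simp

lemma antidiag_contains_repeated_rows_grid: "antidiag_contains w (repeated_rows_grid w)"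
  unfolding antidiag_contains_def repeated_rows_grid_def Let_def by auto

lemma f_grid_repeated_rows_grid: "length w + 2 \<le> f_grid w (repeated_rows_grid w)"
proof -
  have "{i\<in>{1..length w}. row_contains w (repeated_rows_grid w) i} = {1..length w}"
    using row_contains_repeated_rows_grid by blast
  then show ?thesis
    unfolding f_grid_def
    by (simp add: diag_contains_repeated_rows_grid antidiag_contains_repeated_rows_grid)
qed

theorem lemma8:
  fixes w :: "'a list"
  assumes "length w \<ge> 2"
  shows "f_word w \<ge> length w + 2"
  using f_grid_repeated_rows_grid f_grid_le_f_word by (rule order_trans)

end
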